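(* Let $X$ be a separable real Banach space and let $(\Omega,\beta,\mu)$ be a complete probability measure space. Let $T:\Omega\times X\to X$ be a continuous random mapping such that there are real-valued random variables $\alpha_4,\alpha_5:\Omega\to[0,\infty)$ with $\alpha_4(\omega)+\alpha_5(\omega)<1$ for all $\omega\in\Omega$ and, for every $\omega\in\Omega$ and all $X$-valued random variables $x_1,x_2:\Omega\to X$, $$\|T(\omega,x_1(\omega))-T(\omega,x_2(\omega))\|\le \alpha_4(\omega)\|x_1(\omega)-T(\omega,x_2(\omega))\|+\alpha_5(\omega)\|x_2(\omega)-T(\omega,x_1(\omega))\|.$$ Then $T$ has a random fixed point, and it is unique (any two random fixed points of $T$ coincide almost surely).
   Context: An $X$-valued random variable is a map $x:\Omega\to X$ such that $x^{-1}(B)\in\beta$ for every Borel set $B\subseteq X$. A random mapping is a map $T:\Omega\times X\to X$ such that $\omega\mapsto T(\omega,x)$ is an $X$-valued random variable for every fixed $x\in X$. A random mapping $T$ is continuous if the set of $\omega\in\Omega$ for which $x\mapsto T(\omega,x)$ is continuous has $\mu$-measure one. A random fixed point of $T$ is an $X$-valued random variable $x$ with $\mu\{\omega\in\Omega: T(\omega,x(\omega))=x(\omega)\}=1$. *)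

theory Defs
  imports "HOL-Probability.Probability"
begin

definition random_mapping :: "'w measure \<Rightarrow> ('w \<Rightarrow> 'a::topological_space \<Rightarrow> 'a) \<Rightarrow> bool" where
  "random_mapping M T \<longleftrightarrow> (\<forall>x. (\<lambda>w. T w x) \<in> borel_measurable M)"

definition continuous_random_mapping :: "'w measure \<Rightarrow> ('w \<Rightarrow> 'a::topological_space \<Rightarrow> 'a) \<Rightarrow> bool" where
  "continuous_random_mapping M T \<longleftrightarrow> random_mapping M T \<and>
     {w \<in> space M. continuous_on UNIV (T w)} \<in> sets M \<and>
     emeasure M {w \<in> space M. continuous_on UNIV (T w)} = 1"

definition random_fixed_point :: "'w measure \<Rightarrow> ('w \<Rightarrow> 'a::topological_space \<Rightarrow> 'a) \<Rightarrow> ('w \<Rightarrow> 'a) \<Rightarrow> bool" where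
  "random_fixed_point M T x \<longleftrightarrow> x \<in> borel_measurable M \<and>
     {w \<in> space M. T w (x w) = x w} \<in> sets M \<and>
     emeasure M {w \<in> space M. T w (x w) = x w} = 1"

end

theory Submission imports Defs begin

text \<open>Symmetrising the hypothesis in its two random variables (taken constant) shows that every
  \<open>T \<omega>\<close> is a Chatterjea map with constant \<open>c = (\<alpha>\<^sub>4 + \<alpha>\<^sub>5)/2 < 1/2\<close>. Such a map on a Banach space
  has a unique fixed point: its orbits move by geometrically decreasing steps \<open>c/(1 - c)\<close>, hence
  converge, and the limit is fixed. A point \<open>d\<close> with small displacement \<open>\<parallel>d - T \<omega> d\<parallel>\<close> is
  within \<open>\<parallel>d - T \<omega> d\<parallel>/(1 - 2c)\<close> of the fixed point, and displacements are continuous in \<open>d\<close>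
  and measurable in \<open>\<omega>\<close>. So picking, for each \<open>n\<close>, the first point of a countable dense sequence
  with displacement below \<open>(1 - 2c)/(n + 1)\<close> gives measurable approximations converging to the
  fixed point, which is therefore a random variable.\<close>

locale chatterjea_map =
  fixes c :: real and f :: "'a::real_normed_vector \<Rightarrow> 'a"
  assumes c_nonneg: "0 \<le> c" and two_c_less_1: "2 * c < 1"
    and chatterjea: "norm (f u - f v) \<le> c * (norm (u - f v) + norm (v - f u))"
begin

lemma step_le: "norm (f u - f (f u)) \<le> c / (1 - c) * norm (u - f u)"
proof -
  have "norm (f u - f (f u)) \<le> c * norm (u - f (f u))"
    using chatterjea[of u "f u"] by simp
  also have "\<dots> \<le> c * (norm (u - f u) + norm (f u - f (f u)))"
    using c_nonneg by (intro mult_left_mono norm_diff_triangle_le) auto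
  finally have "(1 - c) * norm (f u - f (f u)) \<le> c * norm (u - f u)"
    by (simp add: algebra_simps)
  then show ?thesis
    using two_c_less_1 by (simp add: field_simps)
qed

lemma iterate_step_le: "norm ((f ^^ n) u - (f ^^ Suc n) u) \<le> (c / (1 - c)) ^ n * norm (u - f u)"
proof (induction n)
  case (Suc n)
  have "norm ((f ^^ Suc n) u - (f ^^ Suc (Suc n)) u) \<le> c / (1 - c) * norm ((f ^^ n) u - (f ^^ Suc n) u)"
    using step_le[of "(f ^^ n) u"] by simp
  also have "\<dots> \<le> c / (1 - c) * ((c / (1 - c)) ^ n * norm (u - f u))"
    using Suc c_nonneg two_c_less_1 by (intro mult_left_mono) auto
  finally show ?case by simp
qed simp

lemma limit_of_orbit_is_fixed:
  assumes "(\<lambda>n. (f ^^ n) u) \<longlonglongrightarrow> q"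
  shows "f q = q"
proof -
  have q_Suc: "(\<lambda>n. (f ^^ Suc n) u) \<longlonglongrightarrow> q"
    using LIMSEQ_Suc[OF assms] .
  have "(\<lambda>n. norm (f q - (f ^^ Suc n) u)) \<longlonglongrightarrow> norm (f q - q)"
    by (intro tendsto_intros q_Suc)
  moreover have "(\<lambda>n. c * (norm (q - (f ^^ Suc n) u) + norm ((f ^^ n) u - f q)))
      \<longlonglongrightarrow> c * (norm (q - q) + norm (q - f q))"
    by (intro tendsto_intros assms q_Suc)
  moreover have "norm (f q - (f ^^ Suc n) u) \<le> c * (norm (q - (f ^^ Suc n) u) + norm ((f ^^ n) u - f q))" for n
    using chatterjea[of q "(f ^^ n) u"] by simp
  ultimately have "norm (f q - q) \<le> c * norm (f q - q)"
    by (intro LIMSEQ_le) (auto simp: norm_minus_commute)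
  then have "(1 - c) * norm (f q - q) \<le> 0"
    by (simp add: algebra_simps)
  then show ?thesis
    using two_c_less_1 by (simp add: mult_le_0_iff)
qed

lemma image_dist_fixed_point_le:
  assumes "f p = p"
  shows "(1 - c) * norm (f d - p) \<le> c * norm (d - p)"
proof -
  have "norm (f d - p) \<le> c * (norm (d - p) + norm (p - f d))"
    using chatterjea[of d p] assms by simp
  then show ?thesis
    by (simp add: norm_minus_commute algebra_simps)
qed

lemma dist_fixed_point_le:
  assumes "f p = p"
  shows "(1 - 2 * c) * norm (d - p) \<le> norm (d - f d)"
proof -
  have "(1 - c) * norm (d - p) \<le> (1 - c) * (norm (d - f d) + norm (f d - p))"
    using two_c_less_1 by (intro mult_left_mono norm_diff_triangle_le) auto
  then have "(1 - 2 * c) * norm (d - p) \<le> (1 - c) * norm (d - f d)"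
    using image_dist_fixed_point_le[OF assms, of d] by (simp add: algebra_simps)
  also have "\<dots> \<le> norm (d - f d)"
    using c_nonneg two_c_less_1 by (intro mult_left_le_one_le) auto
  finally show ?thesis .
qed

lemma displacement_le:
  assumes "f p = p"
  shows "norm (d - f d) \<le> 2 * norm (d - p)"
proof -
  have "c * norm (d - p) \<le> (1 - c) * norm (d - p)"
    using two_c_less_1 by (intro mult_right_mono) auto
  then have "(1 - c) * norm (f d - p) \<le> (1 - c) * norm (d - p)"
    using image_dist_fixed_point_le[OF assms, of d] by linarith
  then have "norm (f d - p) \<le> norm (d - p)"
    using two_c_less_1 by simp
  moreover have "norm (d - f d) \<le> norm (d - p) + norm (f d - p)"
    using norm_triangle_ineq[of "d - p" "p - f d"] by (simp add: norm_minus_commute)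
  ultimately show ?thesis
    by simp
qed

lemma fixed_point_unique:
  assumes "f p = p" and "f q = q"
  shows "p = q"
  using dist_fixed_point_le[OF assms(1), of q] assms(2) two_c_less_1
  by (simp add: mult_le_0_iff)

end

lemma convergent_if_geometric_increments:
  fixes x :: "nat \<Rightarrow> 'a::banach"
  assumes "0 \<le> r" and "r < 1" and "\<And>n. norm (x (Suc n) - x n) \<le> r ^ n * C"
  shows "convergent x"
proof -
  have "summable (\<lambda>n. r ^ n * C)"
    using assms by (intro summable_mult2 summable_geometric) auto
  then have "summable (\<lambda>n. norm (x (Suc n) - x n))"
    by (rule summable_comparison_test') (use assms(3) in simp)
  then have "(\<lambda>m. \<Sum>n<m. x (Suc n) - x n) \<longlonglongrightarrow> (\<Sum>n. x (Suc n) - x n)"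
    by (intro summable_LIMSEQ) (rule summable_norm_cancel)
  then have "(\<lambda>m. (x m - x 0) + x 0) \<longlonglongrightarrow> (\<Sum>n. x (Suc n) - x n) + x 0"
    by (intro tendsto_add) (auto simp: sum_lessThan_telescope)
  then show ?thesis
    by (auto simp: convergent_def)
qed

lemma chatterjea_map_has_fixed_point:
  fixes f :: "'a::banach \<Rightarrow> 'a"
  assumes "chatterjea_map c f"
  shows "\<exists>p. f p = p"
proof -
  interpret chatterjea_map c f by fact
  have "norm ((f ^^ Suc n) 0 - (f ^^ n) 0) \<le> (c / (1 - c)) ^ n * norm (0 - f 0)" for n
    using iterate_step_le[of n 0] by (simp only: norm_minus_commute)
  moreover have "0 \<le> c / (1 - c)" and "c / (1 - c) < 1"
    using c_nonneg two_c_less_1 by (auto simp: field_simps)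
  ultimately have "convergent (\<lambda>n. (f ^^ n) 0)"
    by (intro convergent_if_geometric_increments)
  then show ?thesis
    using limit_of_orbit_is_fixed by (auto simp: convergent_def)
qed

lemma chatterjea_map_symmetrize:
  assumes "0 \<le> a" and "0 \<le> b" and "a + b < 1"
    and le: "\<And>u v. norm (f u - f v) \<le> a * norm (u - f v) + b * norm (v - f u)"
  shows "chatterjea_map ((a + b) / 2) f"
proof
  fix u v
  have "norm (f u - f v) \<le> a * norm (v - f u) + b * norm (u - f v)"
    using le[of v u] by (simp add: norm_minus_commute)
  with le[of u v] have "2 * norm (f u - f v) \<le> (a + b) * (norm (u - f v) + norm (v - f u))"
    by (simp add: algebra_simps)
  then show "norm (f u - f v) \<le> (a + b) / 2 * (norm (u - f v) + norm (v - f u))"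
    by simp
qed (use assms in auto)

lemma countable_dense_sequenceE:
  obtains d :: "nat \<Rightarrow> 'a::second_countable_topology"
  where "\<And>X. open X \<Longrightarrow> X \<noteq> {} \<Longrightarrow> \<exists>i. d i \<in> X"
proof -
  obtain D :: "'a set" where D: "countable D" "\<And>X. open X \<Longrightarrow> X \<noteq> {} \<Longrightarrow> \<exists>d\<in>D. d \<in> X"
    using countable_dense_setE by blast
  have "D \<noteq> {}"
    using D(2)[of UNIV] by auto
  with D show ?thesis
    by (intro that[of "from_nat_into D"]) (metis from_nat_into_surj)
qed

lemma measurable_chatterjea_fixed_point:
  fixes f :: "'w \<Rightarrow> 'b::{real_normed_vector, second_countable_topology} \<Rightarrow> 'b"
  assumes [measurable]: "c \<in> borel_measurable M" "\<And>z. (\<lambda>w. f w z) \<in> borel_measurable M"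
    and chatterjea: "\<And>w. w \<in> space M \<Longrightarrow> chatterjea_map (c w) (f w)"
    and fixed: "\<And>w. w \<in> space M \<Longrightarrow> f w (p w) = p w"
  shows "p \<in> borel_measurable M"
proof -
  obtain d :: "nat \<Rightarrow> 'b" where dense: "\<And>X. open X \<Longrightarrow> X \<noteq> {} \<Longrightarrow> \<exists>i. d i \<in> X"
    using countable_dense_sequenceE by blast
  define least_index where "least_index n w = (LEAST i. norm (d i - f w (d i)) < (1 - 2 * c w) / Suc n)" for n w
  have least_index_measurable: "least_index n \<in> measurable M (count_space UNIV)" for n
    unfolding least_index_def by measurable
  have approx_measurable: "(\<lambda>w. d (least_index n w)) \<in> borel_measurable M" for n
    by (rule measurable_compose_countable[OF _ least_index_measurable]) simp
  have approx_close: "norm (d (least_index n w) - p w) < 1 / Suc n" if w: "w \<in> space M" for n w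
  proof -
    interpret chatterjea_map "c w" "f w" using chatterjea[OF w] .
    define r where "r = (1 - 2 * c w) / Suc n"
    have "r > 0"
      using two_c_less_1 by (simp add: r_def)
    then obtain j where "d j \<in> ball (p w) (r / 2)"
      using dense[of "ball (p w) (r / 2)"] by auto
    then have "norm (d j - f w (d j)) < r"
      using displacement_le[OF fixed[OF w], of "d j"] by (simp add: dist_norm norm_minus_commute)
    then have "norm (d (least_index n w) - f w (d (least_index n w))) < r"
      unfolding least_index_def r_def by (rule LeastI)
    then have "(1 - 2 * c w) * norm (d (least_index n w) - p w) < (1 - 2 * c w) * (1 / Suc n)"
      using dist_fixed_point_le[OF fixed[OF w], of "d (least_index n w)"] by (simp add: r_def)
    then show ?thesis
      using two_c_less_1 by (simp only: mult_less_cancel_left_pos diff_gt_0_iff_gt)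
  qed
  show ?thesis
  proof (rule borel_measurable_LIMSEQ_metric[OF approx_measurable])
    fix w assume "w \<in> space M"
    then have "(\<lambda>n. d (least_index n w) - p w) \<longlonglongrightarrow> 0"
      by (intro LIMSEQ_norm_0 approx_close)
    then show "(\<lambda>n. d (least_index n w)) \<longlonglongrightarrow> p w"
      by (rule LIM_zero_cancel)
  qed
qed

lemma (in prob_space) AE_random_fixed_point:
  assumes "random_fixed_point M T x"
  shows "AE w in M. T w (x w) = x w"
  using assms AE_iff_emeasure_eq_1[of "\<lambda>w. T w (x w) = x w"]
  by (simp add: random_fixed_point_def pred_def)

theorem corollary3p5:
  fixes M :: "'w measure"
    and T :: "'w \<Rightarrow> 'a::{banach, second_countable_topology} \<Rightarrow> 'a"
    and \<alpha>4 \<alpha>5 :: "'w \<Rightarrow> real"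
  assumes "prob_space M"
    and "complete_measure M"
    and "continuous_random_mapping M T"
    and "\<alpha>4 \<in> borel_measurable M" and "\<alpha>5 \<in> borel_measurable M"
    and "\<And>w. w \<in> space M \<Longrightarrow> \<alpha>4 w \<ge> 0 \<and> \<alpha>5 w \<ge> 0 \<and> \<alpha>4 w + \<alpha>5 w < 1"
    and "\<And>w x1 x2. w \<in> space M \<Longrightarrow> x1 \<in> borel_measurable M \<Longrightarrow> x2 \<in> borel_measurable M \<Longrightarrow>
           norm (T w (x1 w) - T w (x2 w))
             \<le> \<alpha>4 w * norm (x1 w - T w (x2 w)) + \<alpha>5 w * norm (x2 w - T w (x1 w))"
  shows "(\<exists>x. random_fixed_point M T x) \<and>
         (\<forall>x y. random_fixed_point M T x \<longrightarrow> random_fixed_point M T y \<longrightarrow>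
                (AE w in M. x w = y w))"
proof -
  interpret prob_space M by fact
  have chatterjea: "chatterjea_map ((\<alpha>4 w + \<alpha>5 w) / 2) (T w)" if "w \<in> space M" for w
  proof (rule chatterjea_map_symmetrize)
    show "norm (T w u - T w v) \<le> \<alpha>4 w * norm (u - T w v) + \<alpha>5 w * norm (v - T w u)" for u v
      using assms(7)[OF that, of "\<lambda>_. u" "\<lambda>_. v"] by simp
  qed (use assms(6)[OF that] in auto)
  have fixed_point_unique: "p = q" if "w \<in> space M" and "T w p = p" and "T w q = q" for w p q
    using chatterjea[OF that(1)] that(2,3) by (rule chatterjea_map.fixed_point_unique)
  define P where "P w = (SOME p. T w p = p)" for w
  have P_fixed: "T w (P w) = P w" if "w \<in> space M" for w
    unfolding P_def using chatterjea_map_has_fixed_point[OF chatterjea[OF that]] by (rule someI_ex)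
  have "(\<lambda>w. (\<alpha>4 w + \<alpha>5 w) / 2) \<in> borel_measurable M"
    using assms(4,5) by (intro borel_measurable_divide borel_measurable_add borel_measurable_const)
  moreover have "(\<lambda>w. T w z) \<in> borel_measurable M" for z
    using assms(3) by (simp add: continuous_random_mapping_def random_mapping_def)
  ultimately have "P \<in> borel_measurable M"
    using chatterjea P_fixed by (rule measurable_chatterjea_fixed_point)
  moreover have "{w \<in> space M. T w (P w) = P w} = space M"
    using P_fixed by auto
  ultimately have "random_fixed_point M T P"
    by (simp add: random_fixed_point_def emeasure_space_1)
  moreover have "AE w in M. x w = y w"
    if "random_fixed_point M T x" and "random_fixed_point M T y" for x y
    using AE_space AE_random_fixed_point[OF that(1)] AE_random_fixed_point[OF that(2)]
    by eventually_elim (rule fixed_point_unique)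
  ultimately show ?thesis
    by blast
qed

end
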